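(* For every nonnegative integer $n$, $$\sum_{k=0}^{\infty}(-1)^k(4k+1)\,\frac{(-2n)_k\,(-n+\tfrac14)_k\,(\tfrac12)_k}{k!\,(n+\tfrac54)_k\,(2n+\tfrac32)_k}=\left(\frac{2^2}{3^3}\right)^n\frac{(\tfrac54)_n^2}{(\tfrac{13}{12})_n(\tfrac{5}{12})_n}.$$ (The sum is finite, since $(-2n)_k=0$ for $k>2n$.)
   Context: $(a)_j=\Gamma(a+j)/\Gamma(a)=a(a+1)\cdots(a+j-1)$ denotes the rising factorial (Pochhammer symbol), with $(a)_0=1$. *)

theory Defs
  imports Complex_Main
begin

end

theory Submission
  imports Defs
begin

(* Proof by creative telescoping (the Wilf-Zeilberger method).

   Write F(x,k) = (4k+1) t(x,k), where t(x,k) is the hypergeometric term of the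
   sum with the parameter n replaced by a real x >= 0.  For x = n the term t(n,k)
   vanishes once k > 2n, because of the factor (-2n)_k, so the series is the finite
   sum S(n) = sum_{k <= 2n} F(n,k).

   The heart of the proof is an explicit certificate G(x,k) with
       3(12x+13)(12x+5) F(x+1,k) - 4(4x+5)^2 F(x,k) = G(x,k+1) - G(x,k).
   To verify it, t(x+1,k+1) and t(x,k+1) are written as t(x+1,k) times rational
   functions of k (the term ratio and a shift factor in x); the identity then
   reduces to a polynomial identity.  Summing over k
   telescopes, and G vanishes at both ends, giving the first-order recurrence
       3(12n+13)(12n+5) S(n+1) = 4(4n+5)^2 S(n).
   The right-hand side satisfies the same recurrence, and both sides are 1 at
   n = 0, so they agree for every n. *)

definition hterm :: "real \<Rightarrow> nat \<Rightarrow> real" where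
  "hterm x k = (-1) ^ k * (pochhammer (- 2 * x) k * pochhammer (- x + 1/4) k * pochhammer (1/2) k)
     / (fact k * pochhammer (x + 5/4) k * pochhammer (2 * x + 3/2) k)"

definition ratio :: "real \<Rightarrow> real \<Rightarrow> real" where
  "ratio x k = - ((k - 2*x) * (k - x + 1/4) * (k + 1/2)) / ((k + 1) * (k + x + 5/4) * (k + 2*x + 3/2))"

definition shift :: "real \<Rightarrow> real \<Rightarrow> real" where
  "shift x j = (j - 2*x - 2) * (j - 2*x - 1) * (j - 2*x) * (4*j - 4*x - 3) * (4*j - 4*x + 1)
     * (2*j + 1) * (2*j + 4*x + 5) / ((2*x + 2) * (2*x + 1) * (4*x + 3)^2 * (4*x + 5)^2 * (j + 1))"

lemma hterm_0 [simp]: "hterm x 0 = 1"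
  by (simp add: hterm_def)

text \<open>Each Pochhammer symbol grows by one linear factor, so numerator and denominator
  of \<open>hterm x (Suc k)\<close> are exactly those of \<open>hterm x k\<close> times those of the ratio.\<close>

lemma hterm_Suc: "hterm x (Suc k) = hterm x k * ratio x (real k)"
  unfolding hterm_def ratio_def pochhammer_rec' fact_Suc of_nat_Suc power_Suc times_divide_times_eq
  by (intro arg_cong2[where f = "(/)"]) algebra+

text \<open>For \<open>x \<ge> 0\<close> no denominator vanishes.\<close>

lemma shift_ratio_identity:
  fixes x j :: real
  assumes "x \<ge> 0" "j \<ge> 0"
  shows "shift x j * ratio x (j + 1) = ratio (x + 1) j * shift x (j + 1)"
proof -
  have nz: "(2*x + 2) * (2*x + 1) * (4*x + 3)^2 * (4*x + 5)^2 * (j + 1)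
          * ((j + 1 + 1) * (j + 1 + x + 5/4) * (j + 1 + 2*x + 3/2)) \<noteq> 0"
    "((j + 1) * (j + (x + 1) + 5/4) * (j + 2*(x + 1) + 3/2))
          * ((2*x + 2) * (2*x + 1) * (4*x + 3)^2 * (4*x + 5)^2 * (j + 1 + 1)) \<noteq> 0"
    using assms by (auto simp: add_nonneg_eq_0_iff)
  show ?thesis
    unfolding shift_def ratio_def times_divide_times_eq frac_eq_eq[OF nz] by algebra
qed

lemma shift_ratio_base:
  assumes "x \<ge> 0"
  shows "ratio x 0 = shift x 0"
proof -
  have nz: "(0 + 1) * (0 + x + 5/4) * (0 + 2*x + 3/2) \<noteq> 0"
    "(2*x + 2) * (2*x + 1) * (4*x + 3)^2 * (4*x + 5)^2 * (0 + 1) \<noteq> 0"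
    using assms by (auto simp: add_nonneg_eq_0_iff)
  show ?thesis
    unfolding shift_def ratio_def frac_eq_eq[OF nz] by algebra
qed

text \<open>The contiguity relation in \<open>x\<close>: both sides have the same value at \<open>j = 0\<close> and the
  same ratio in \<open>j\<close>, by the two preceding lemmas.\<close>

lemma hterm_shift:
  assumes "x \<ge> 0"
  shows "hterm x (Suc j) = hterm (x + 1) j * shift x (real j)"
proof (induction j)
  case 0
  show ?case using shift_ratio_base[OF assms] by (simp add: hterm_Suc)
next
  case (Suc j)
  have "hterm x (Suc (Suc j)) = hterm (x + 1) j * (shift x (real j) * ratio x (real j + 1))"
    unfolding hterm_Suc[of x "Suc j"] Suc.IH by (simp add: add.commute)
  also have "\<dots> = hterm (x + 1) j * ratio (x + 1) (real j) * shift x (real j + 1)"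
    using shift_ratio_identity[OF assms, of "real j"] by simp
  also have "\<dots> = hterm (x + 1) (Suc j) * shift x (real (Suc j))"
    by (simp add: hterm_Suc add.commute[of 1])
  finally show ?case .
qed

text \<open>For \<open>x = n\<close> the factor \<open>(-2n)\<^sub>k\<close> makes the term vanish beyond \<open>k = 2n\<close>.\<close>

lemma hterm_vanish:
  assumes "2 * n < k"
  shows "hterm (real n) k = 0"
proof -
  have "pochhammer (- 2 * real n) k = pochhammer (- of_nat (2 * n)) k" by simp
  also have "\<dots> = (0 :: real)" using assms by (simp only: pochhammer_of_nat_eq_0_iff)
  finally show ?thesis by (simp add: hterm_def)
qed

definition summand :: "real \<Rightarrow> nat \<Rightarrow> real" where
  "summand x k = (4 * real k + 1) * hterm x k"

text \<open>Numerator and denominator of the rational certificate (as produced by Zeilberger's algorithm).\<close>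

definition cert_poly :: "real \<Rightarrow> real \<Rightarrow> real" where
  "cert_poly x k =
      (- 17262 - 140904 * x - 452600 * x^2 - 733056 * x^3 - 631552 * x^4 - 274432 * x^5 - 47104 * x^6)
    + (44178 + 374292 * x + 1203632 * x^2 + 1899392 * x^3 + 1551360 * x^4 + 619520 * x^5 + 94208 * x^6) * k
    + (- 5944 - 137688 * x - 551104 * x^2 - 868352 * x^3 - 588800 * x^4 - 141312 * x^5) * k^2
    + (- 35360 - 133952 * x - 140800 * x^2 - 13312 * x^3 + 24576 * x^4) * k^3
    + (14288 + 80832 * x + 103168 * x^2 + 33792 * x^3) * k^4
    + (8896 - 2560 * x - 9216 * x^2) * k^5
    + (- 6400 - 3072 * x) * k^6
    + 1024 * k^7"

definition cert_den :: "real \<Rightarrow> real" where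
  "cert_den x = 4 * (x + 1) * (2*x + 1) * (4*x + 3)^2"

definition cert :: "real \<Rightarrow> nat \<Rightarrow> real" where
  "cert x k = (if k = 0 then 0 else hterm (x + 1) (k - 1) * cert_poly x (real k) / cert_den x)"

lemma cert_Suc: "cert x (Suc j) = hterm (x + 1) j * cert_poly x (real (Suc j)) / cert_den x"
  by (simp add: cert_def)

text \<open>Clearing the three denominators in an identity of the shape of
  \<open>wz_coefficient_identity\<close> below.\<close>

lemma clear_denominators:
  fixes a b c d e q K w P1 P2 :: real
  assumes "d \<noteq> 0" "e \<noteq> 0" "c \<noteq> 0"
    and "c * (q * w * a * e - K * w * b * d) = (a * P2 - P1 * d) * e"
  shows "q * w * (a / d) - K * w * (b / e) = (a / d * P2 - P1) / c"
proof -
  have "q * w * (a / d) - K * w * (b / e) = c * (q * w * a * e - K * w * b * d) / (c * d * e)"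
    using assms by (simp add: field_simps)
  also have "\<dots> = (a / d * P2 - P1) / c"
    unfolding assms(4) using assms by (simp add: field_simps)
  finally show ?thesis .
qed

text \<open>The telescoping identity at \<open>k = j + 1\<close>, divided by the common factor \<open>hterm (x+1) j\<close>:
  an identity of rational functions, verified as a polynomial identity.\<close>

lemma wz_coefficient_identity:
  fixes x j :: real
  assumes "x \<ge> 0" "j \<ge> 0"
  shows "3 * (12*x + 13) * (12*x + 5) * (4*j + 5) * ratio (x + 1) j
           - 4 * (4*x + 5)^2 * (4*j + 5) * shift x j
         = (ratio (x + 1) j * cert_poly x (j + 2) - cert_poly x (j + 1)) / cert_den x"
  unfolding ratio_def shift_def
proof (rule clear_denominators)
  show "(j + 1) * (j + (x + 1) + 5/4) * (j + 2 * (x + 1) + 3/2) \<noteq> 0"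
    "(2*x + 2) * (2*x + 1) * (4*x + 3)^2 * (4*x + 5)^2 * (j + 1) \<noteq> 0" "cert_den x \<noteq> 0"
    using assms by (auto simp: cert_den_def add_nonneg_eq_0_iff)
qed (unfold cert_den_def cert_poly_def, algebra)

lemma wz_identity:
  assumes "x \<ge> 0"
  shows "3 * (12*x + 13) * (12*x + 5) * summand (x + 1) k - 4 * (4*x + 5)^2 * summand x k
       = cert x (Suc k) - cert x k"
proof (cases k)
  case 0
  have "cert_den x \<noteq> 0" using assms by (auto simp: cert_den_def add_nonneg_eq_0_iff)
  moreover have "cert_poly x 1 = (3 * (12*x + 13) * (12*x + 5) - 4 * (4*x + 5)^2) * cert_den x"
    unfolding cert_poly_def cert_den_def by simp algebra
  ultimately show ?thesis using 0 by (simp add: summand_def cert_def)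
next
  case (Suc j)
  let ?t = "hterm (x + 1) j"
  have step: "hterm (x + 1) (Suc j) = ?t * ratio (x + 1) (real j)" by (rule hterm_Suc)
  have "3 * (12*x + 13) * (12*x + 5) * summand (x + 1) k - 4 * (4*x + 5)^2 * summand x k
      = ?t * (3 * (12*x + 13) * (12*x + 5) * (4 * real j + 5) * ratio (x + 1) (real j)
              - 4 * (4*x + 5)^2 * (4 * real j + 5) * shift x (real j))"
    unfolding Suc summand_def step hterm_shift[OF assms] by (simp add: algebra_simps)
  also have "\<dots> = ?t * ((ratio (x + 1) (real j) * cert_poly x (real j + 2)
                            - cert_poly x (real j + 1)) / cert_den x)"
    by (simp only: wz_coefficient_identity[OF assms of_nat_0_le_iff])
  also have "\<dots> = cert x (Suc k) - cert x k"
    unfolding Suc cert_Suc step of_nat_Suc by (simp add: diff_divide_distrib right_diff_distrib add_ac)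
  finally show ?thesis .
qed

definition partial_sum :: "nat \<Rightarrow> real" where
  "partial_sum n = (\<Sum>k<2 * n + 1. summand (real n) k)"

lemma partial_sum_extend:
  assumes "2 * n < M"
  shows "(\<Sum>k<M. summand (real n) k) = partial_sum n"
  unfolding partial_sum_def
  by (rule sum.mono_neutral_right) (use assms in \<open>auto simp: summand_def hterm_vanish\<close>)

text \<open>Summing \<open>wz_identity\<close> over \<open>k < 2n + 4\<close>: the right-hand side telescopes to
  \<open>cert n (2n+4) - cert n 0 = 0\<close>.\<close>

lemma partial_sum_recurrence:
  "3 * (12 * real n + 13) * (12 * real n + 5) * partial_sum (Suc n)
     = 4 * (4 * real n + 5)^2 * partial_sum n"
proof -
  let ?x = "real n"
  have "(\<Sum>k<2 * n + 4. 3 * (12*?x + 13) * (12*?x + 5) * summand (?x + 1) k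
                         - 4 * (4*?x + 5)^2 * summand ?x k)
      = cert ?x (2 * n + 4) - cert ?x 0"
    using wz_identity[of ?x] by (simp add: sum_lessThan_telescope)
  also have "\<dots> = 0"
    using hterm_vanish[of "Suc n" "2 * n + 3"] by (simp add: cert_def add.commute)
  finally have "3 * (12*?x + 13) * (12*?x + 5) * (\<Sum>k<2 * n + 4. summand (real (Suc n)) k)
              = 4 * (4*?x + 5)^2 * (\<Sum>k<2 * n + 4. summand ?x k)"
    by (simp add: sum_subtractf sum_distrib_left add.commute)
  moreover have "(\<Sum>k<2 * n + 4. summand (real (Suc n)) k) = partial_sum (Suc n)"
    "(\<Sum>k<2 * n + 4. summand ?x k) = partial_sum n"
    by (rule partial_sum_extend, simp)+
  ultimately show ?thesis by simp
qed

definition closed_form :: "nat \<Rightarrow> real" where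
  "closed_form n = (4 / 27) ^ n * (pochhammer (5/4) n) ^ 2 / (pochhammer (13/12) n * pochhammer (5/12) n)"

lemma closed_form_Suc:
  "closed_form (Suc n) = closed_form n
     * ((4 / 27) * (real n + 5/4)^2 / ((real n + 13/12) * (real n + 5/12)))"
  unfolding closed_form_def pochhammer_rec' power_Suc times_divide_times_eq
  by (intro arg_cong2[where f = "(/)"]) algebra+

lemma closed_form_recurrence:
  "3 * (12 * real n + 13) * (12 * real n + 5) * closed_form (Suc n)
     = 4 * (4 * real n + 5)^2 * closed_form n"
proof -
  have factor: "3 * a * b * ((4 / 27) * (d / 4)^2 / ((a / 12) * (b / 12))) = 4 * d^2"
    if "a \<noteq> 0" "b \<noteq> 0" for a b d :: real
    using that by (simp add: field_simps power2_eq_square)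
  have "real n + 5/4 = (4 * real n + 5) / 4" "real n + 13/12 = (12 * real n + 13) / 12"
    "real n + 5/12 = (12 * real n + 5) / 12" by simp_all
  then have coeff: "3 * (12 * real n + 13) * (12 * real n + 5)
      * ((4 / 27) * (real n + 5/4)^2 / ((real n + 13/12) * (real n + 5/12))) = 4 * (4 * real n + 5)^2"
    by (simp only:) (rule factor; simp add: add_nonneg_eq_0_iff)
  have "3 * (12 * real n + 13) * (12 * real n + 5) * closed_form (Suc n)
      = 3 * (12 * real n + 13) * (12 * real n + 5)
          * ((4 / 27) * (real n + 5/4)^2 / ((real n + 13/12) * (real n + 5/12))) * closed_form n"
    unfolding closed_form_Suc by (simp only: ac_simps)
  then show ?thesis unfolding coeff .
qed

lemma partial_sum_closed_form: "partial_sum n = closed_form n"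
proof (induction n)
  case 0
  show ?case by (simp add: partial_sum_def summand_def closed_form_def)
next
  case (Suc n)
  let ?c = "3 * (12 * real n + 13) * (12 * real n + 5)"
  have "?c * partial_sum (Suc n) = ?c * closed_form (Suc n)"
    using partial_sum_recurrence[of n] closed_form_recurrence[of n] Suc.IH by simp
  moreover have "?c \<noteq> 0" by (simp add: add_nonneg_eq_0_iff)
  ultimately show ?case by simp
qed

theorem theorem3:
  fixes n :: nat
  shows "(\<Sum>k. (-1::real) ^ k * (4 * real k + 1) *
            (pochhammer (- 2 * real n) k * pochhammer (- real n + 1/4) k * pochhammer (1/2) k)
          / (fact k * pochhammer (real n + 5/4) k * pochhammer (2 * real n + 3/2) k))
       = (4 / 27) ^ n * (pochhammer (5/4) n) ^ 2
          / (pochhammer (13/12) n * pochhammer (5/12) n)"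
proof -
  have "(\<Sum>k. summand (real n) k) = partial_sum n"
    unfolding partial_sum_def by (rule suminf_finite) (auto simp: summand_def hterm_vanish)
  also have "\<dots> = closed_form n" by (rule partial_sum_closed_form)
  finally show ?thesis unfolding summand_def hterm_def closed_form_def by (simp add: ac_simps)
qed

end
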